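(* Let $d\in\{1,2\}$. With the polymer defined using the scaling constants $c_{N,d}$ (which satisfy $\lim_{N\to\infty}c_{N,1}^2N^{1/2}=0$ if $d=1$ and $\lim_{N\to\infty}c_{N,2}^2\log N=0$ if $d=2$), the rescaled mean square displacement satisfies $$\frac{\langle \omega(N)^2\rangle_{N,h}}{N}\longrightarrow 1$$ in probability (with respect to $Q$) as $N\to\infty$.
   Context: For $N\ge 1$, $P^N_0$ is the uniform probability measure on nearest-neighbour walks $\omega:\{0,1,\dots,N\}\to\mathbb{Z}^d$ with $\omega(0)=0$ and $|\omega(n)-\omega(n-1)|=1$ (each of the $(2d)^N$ walks has weight $(2d)^{-N}$). The random environment $h=\{h(n,x):n\in\mathbb{N},x\in\mathbb{Z}^d\}$ is a family of i.i.d. random variables with $h(n,x)=\pm1$ each with probability $1/2$, defined on a probability space $(H,\mathcal{G},Q)$ and independent of the walk; $E_Q$ denotes expectation under $Q$. $(c_{N,d})_N$ is a sequence of positive numbers with $\lim_{N\to\infty}c^2_{N,1}N^{1/2}=0$ for $d=1$ and $\lim_{N\to\infty}c^2_{N,2}\log N=0$ for $d=2$. The unnormalized polymer density is $p(N,x)=\int 1_{[\omega(N)=x]}\prod_{n=1}^N[1+c_{N,d}h(n,\omega(n))]\,dP^N_0(\omega)$, the partition function is $Z(N)=\sum_x p(N,x)$, $p_N(N,x)=p(N,x)/Z(N)$, and $\langle\omega(N)^2\rangle_{N,h}=\sum_{x\in\mathbb{Z}^d}|x|^2p_N(N,x)$. *)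

theory Defs
  imports "HOL-Probability.Probability"
begin

text \<open>Points of \<open>\<int>^d\<close> are represented as integer lists of length \<open>d\<close>.\<close>

definition lattice :: "nat \<Rightarrow> int list set" where
  "lattice d = {x. length x = d}"

definition unit_steps :: "nat \<Rightarrow> int list set" where
  "unit_steps d = {v. length v = d \<and> (\<Sum>i<d. \<bar>v ! i\<bar>) = 1}"

text \<open>A nearest-neighbour walk of length \<open>N\<close> started at 0 is encoded by its list of
  increments \<open>s\<close> (length \<open>N\<close>, each a unit step); \<open>walk_pos d s n = \<omega>(n)\<close>.\<close>
definition walks :: "nat \<Rightarrow> nat \<Rightarrow> int list list set" where
  "walks d N = {s. length s = N \<and> set s \<subseteq> unit_steps d}"

definition walk_pos :: "nat \<Rightarrow> int list list \<Rightarrow> nat \<Rightarrow> int list" where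
  "walk_pos d s n = map (\<lambda>i. \<Sum>k<n. s ! k ! i) [0..<d]"

definition sqnorm :: "int list \<Rightarrow> real" where
  "sqnorm x = (\<Sum>i<length x. real_of_int (x ! i) ^ 2)"

text \<open>Unnormalized polymer density \<open>p(N,x)\<close> for environment \<open>h\<close> (as a function of
  \<open>n\<close> and site) and coupling constant \<open>cN\<close>:
  integral of \<open>1[\<omega>(N)=x] \<Prod>_{n=1}^N (1 + cN h(n,\<omega>(n)))\<close> against the uniform measure
  \<open>P_0^N\<close> (weight \<open>(2d)^{-N}\<close> per walk).\<close>
definition polymer_p :: "nat \<Rightarrow> real \<Rightarrow> (nat \<Rightarrow> int list \<Rightarrow> real) \<Rightarrow> nat \<Rightarrow> int list \<Rightarrow> real" where
  "polymer_p d cN h N x =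
     (\<Sum>s\<in>walks d N. (if walk_pos d s N = x then 1 else 0) *
        (\<Prod>n=1..N. 1 + cN * h n (walk_pos d s n))) / (2 * real d) ^ N"

text \<open>All endpoints lie in the box \<open>{x. \<forall>i. |x_i| \<le> N}\<close>, so sums over \<open>\<int>^d\<close> of
  quantities supported on possible endpoints are taken over this finite box.\<close>
definition box :: "nat \<Rightarrow> nat \<Rightarrow> int list set" where
  "box d N = {x \<in> lattice d. \<forall>i<d. \<bar>x ! i\<bar> \<le> int N}"

definition partition_fn :: "nat \<Rightarrow> real \<Rightarrow> (nat \<Rightarrow> int list \<Rightarrow> real) \<Rightarrow> nat \<Rightarrow> real" where
  "partition_fn d cN h N = (\<Sum>x\<in>box d N. polymer_p d cN h N x)"

definition polymer_pN :: "nat \<Rightarrow> real \<Rightarrow> (nat \<Rightarrow> int list \<Rightarrow> real) \<Rightarrow> nat \<Rightarrow> int list \<Rightarrow> real" where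
  "polymer_pN d cN h N x = polymer_p d cN h N x / partition_fn d cN h N"

definition mean_sq_disp :: "nat \<Rightarrow> real \<Rightarrow> (nat \<Rightarrow> int list \<Rightarrow> real) \<Rightarrow> nat \<Rightarrow> real" where
  "mean_sq_disp d cN h N = (\<Sum>x\<in>box d N. sqnorm x * polymer_pN d cN h N x)"

end

theory Submission
  imports Defs
begin

text \<open>Let \<open>W(s) = \<Prod>\<^sub>n (1 + c h(n, \<omega>\<^sub>s(n)))\<close> be the polymer weight of the walk \<open>s\<close>, and let
  \<open>Z\<^sub>N\<close>, \<open>A\<^sub>N\<close> be the averages over all walks of \<open>W(s)\<close> and of \<open>W(s) |\<omega>\<^sub>s(N)|\<^sup>2 / N\<close>, so that
  \<open>\<langle>\<omega>(N)\<^sup>2\<rangle> / N = A\<^sub>N / Z\<^sub>N\<close>. Both have mean \<open>1\<close>, since \<open>E W(s) = 1\<close> and \<open>E|\<omega>(N)|\<^sup>2 = N\<close>.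
  Since \<open>E W(s) W(t) = (1 + c\<^sup>2)\<^bsup>L(s,t)\<^esup>\<close>, where \<open>L\<close> counts the meetings of the two walks, their
  second moments (together with \<open>E|\<omega>(N)|\<^sup>4 \<le> 9N\<^sup>2\<close>) are controlled by \<open>E\<^sub>s\<^sub>,\<^sub>t (1 + c\<^sup>2)\<^bsup>2L\<^esup> - 1\<close>.
  A renewal argument bounds this by a multiple of \<open>c\<^sup>2\<close> times the expected number of meetings,
  which is \<open>O(\<surd>N)\<close> for \<open>d = 1\<close> and \<open>O(log N)\<close> for \<open>d = 2\<close>; the hypotheses on \<open>c\<^sub>N\<close> make it
  vanish, and Chebyshev's inequality gives \<open>Z\<^sub>N, A\<^sub>N \<rightarrow> 1\<close> in probability.\<close>

section \<open>Nearest-neighbour walks\<close>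

definition walk_coord :: "int list list \<Rightarrow> nat \<Rightarrow> nat \<Rightarrow> int" where
  "walk_coord s n i = (\<Sum>k<n. s ! k ! i)"

lemma walk_pos_eq_map_coord: "walk_pos d s n = map (walk_coord s n) [0..<d]"
  by (simp add: walk_pos_def walk_coord_def)

lemma walk_coord_0 [simp]: "walk_coord s 0 i = 0"
  by (simp add: walk_coord_def)

lemma walk_coord_Cons [simp]: "walk_coord (e # s) (Suc n) i = e ! i + walk_coord s n i"
  unfolding walk_coord_def sum.lessThan_Suc_shift by simp

lemma walks_0 [simp]: "walks d 0 = {[]}"
  by (auto simp: walks_def)

lemma walks_Suc: "walks d (Suc N) = (\<lambda>(e, s). e # s) ` (unit_steps d \<times> walks d N)"
  by (auto simp: walks_def length_Suc_conv image_iff)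

lemma abs_unit_step_nth_le: "v \<in> unit_steps d \<Longrightarrow> i < d \<Longrightarrow> \<bar>v ! i\<bar> \<le> 1"
  unfolding unit_steps_def using member_le_sum[of i "{..<d}" "\<lambda>j. \<bar>v ! j\<bar>"] by auto

lemma finite_unit_steps: "finite (unit_steps d)"
proof (rule finite_subset)
  show "unit_steps d \<subseteq> {xs. set xs \<subseteq> {-1..1} \<and> length xs = d}"
    using abs_unit_step_nth_le by (fastforce simp: unit_steps_def in_set_conv_nth abs_le_iff)
  show "finite {xs. set xs \<subseteq> {-1..1::int} \<and> length xs = d}"
    by (rule finite_lists_length_eq) auto
qed

lemma finite_walks [simp]: "finite (walks d N)"
  by (induction N) (auto simp: walks_Suc finite_unit_steps)

lemma sum_walks_Suc:
  "(\<Sum>s\<in>walks d (Suc N). f s) = (\<Sum>e\<in>unit_steps d. \<Sum>s\<in>walks d N. f (e # s))"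
proof -
  have "inj_on (\<lambda>(e, s). e # s) (unit_steps d \<times> walks d N)"
    by (auto simp: inj_on_def)
  then show ?thesis
    unfolding walks_Suc sum.reindex[OF \<open>inj_on _ _\<close>] by (simp add: sum.cartesian_product split_beta)
qed

lemma sum2_walks_Suc:
  "(\<Sum>s\<in>walks d (Suc N). \<Sum>t\<in>walks d (Suc N). f s t) =
   (\<Sum>e\<in>unit_steps d. \<Sum>e'\<in>unit_steps d. \<Sum>s\<in>walks d N. \<Sum>t\<in>walks d N. f (e # s) (e' # t))"
  unfolding sum_walks_Suc by (rule sum.cong[OF refl], rule sum.swap)

lemma card_walks: "card (walks d N) = card (unit_steps d) ^ N"
proof (induction N)
  case (Suc N)
  have "card (walks d (Suc N)) = (\<Sum>s\<in>walks d (Suc N). 1)" by simp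
  also have "\<dots> = card (unit_steps d) * card (walks d N)"
    unfolding sum_walks_Suc by simp
  finally show ?case using Suc by simp
qed simp

lemma walk_pos_in_lattice: "walk_pos d s n \<in> lattice d"
  by (simp add: walk_pos_def lattice_def)

lemma walk_pos_eq_iff: "walk_pos d s n = walk_pos d t m \<longleftrightarrow> (\<forall>i<d. walk_coord s n i = walk_coord t m i)"
  by (auto simp: walk_pos_eq_map_coord)

lemma sqnorm_walk_pos: "sqnorm (walk_pos d s n) = (\<Sum>i<d. real_of_int (walk_coord s n i) ^ 2)"
  by (simp add: sqnorm_def walk_pos_eq_map_coord)

lemma walk_pos_in_box:
  assumes "s \<in> walks d N"
  shows "walk_pos d s N \<in> box d N"
proof -
  have "\<bar>walk_coord s N i\<bar> \<le> int N" if "i < d" for i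
  proof -
    have "\<bar>walk_coord s N i\<bar> \<le> (\<Sum>k<N. \<bar>s ! k ! i\<bar>)"
      unfolding walk_coord_def by (rule sum_abs)
    also have "\<dots> \<le> (\<Sum>k<N. 1)"
      using assms that by (intro sum_mono abs_unit_step_nth_le) (auto simp: walks_def)
    finally show ?thesis by simp
  qed
  then show ?thesis by (auto simp: box_def lattice_def walk_pos_eq_map_coord)
qed

lemma finite_box: "finite (box d N)"
proof (rule finite_subset)
  show "box d N \<subseteq> {xs. set xs \<subseteq> {-int N..int N} \<and> length xs = d}"
    by (auto simp: box_def lattice_def in_set_conv_nth abs_le_iff minus_le_iff)
  show "finite {xs. set xs \<subseteq> {-int N..int N} \<and> length xs = d}"
    by (rule finite_lists_length_eq) auto
qed

lemma unit_steps_1: "unit_steps 1 = {[1], [-1]}"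
proof -
  have "v \<in> unit_steps 1 \<longleftrightarrow> v = [1] \<or> v = [-1]" for v
  proof
    assume "v \<in> unit_steps 1"
    then obtain a where "v = [a]" and "\<bar>a\<bar> = 1"
      by (auto simp: unit_steps_def length_Suc_conv)
    then show "v = [1] \<or> v = [-1]" by (auto simp: abs_if split: if_splits)
  qed (auto simp: unit_steps_def)
  then show ?thesis by auto
qed

lemma unit_steps_2: "unit_steps 2 = {[1, 0], [-1, 0], [0, 1], [0, -1]}"
proof -
  have "v \<in> unit_steps 2 \<longleftrightarrow> v = [1, 0] \<or> v = [-1, 0] \<or> v = [0, 1] \<or> v = [0, -1]" for v
  proof
    assume "v \<in> unit_steps 2"
    then obtain a b where v: "v = [a, b]" and "\<bar>a\<bar> + \<bar>b\<bar> = 1"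
      by (auto simp: unit_steps_def length_Suc_conv numeral_2_eq_2 lessThan_Suc)
    then have "(a = 1 \<and> b = 0) \<or> (a = -1 \<and> b = 0) \<or> (a = 0 \<and> b = 1) \<or> (a = 0 \<and> b = -1)"
      by arith
    with v show "v = [1, 0] \<or> v = [-1, 0] \<or> v = [0, 1] \<or> v = [0, -1]" by auto
  qed (auto simp: unit_steps_def numeral_2_eq_2 lessThan_Suc)
  then show ?thesis by auto
qed

definition num_steps :: "nat \<Rightarrow> real" where
  "num_steps d = real (card (unit_steps d))"

lemma num_steps_1: "num_steps 1 = 2"
  unfolding num_steps_def unit_steps_1 by simp

lemma num_steps_2: "num_steps 2 = 4"
  unfolding num_steps_def unit_steps_2 by simp

lemma num_steps_low_dim: "d \<in> {1, 2} \<Longrightarrow> num_steps d = 2 * real d"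
  using num_steps_1 num_steps_2 by auto

lemma num_steps_pos: "d \<in> {1, 2} \<Longrightarrow> num_steps d > 0"
  by (auto simp: num_steps_low_dim)

lemma card_walks_real: "real (card (walks d N)) = num_steps d ^ N"
  by (simp add: card_walks num_steps_def)

section \<open>Meetings of two independent walks\<close>

text \<open>Two walks \<open>s, t\<close> whose starting points differ by the offset \<open>y\<close> (only the coordinates
  \<open>i < d\<close> of \<open>y\<close> matter) meet at time \<open>n\<close> if \<open>y + \<omega>_s(n) = \<omega>_t(n)\<close>.\<close>

definition walks_meet :: "nat \<Rightarrow> (nat \<Rightarrow> int) \<Rightarrow> int list list \<Rightarrow> int list list \<Rightarrow> nat \<Rightarrow> bool" where
  "walks_meet d y s t n \<longleftrightarrow> (\<forall>i<d. y i + walk_coord s n i = walk_coord t n i)"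

definition offset_step :: "(nat \<Rightarrow> int) \<Rightarrow> int list \<Rightarrow> int list \<Rightarrow> nat \<Rightarrow> int" where
  "offset_step y e e' = (\<lambda>i. y i + e ! i - e' ! i)"

definition meeting_count :: "nat \<Rightarrow> nat \<Rightarrow> (nat \<Rightarrow> int) \<Rightarrow> int list list \<Rightarrow> int list list \<Rightarrow> nat" where
  "meeting_count d N y s t = (\<Sum>n=1..N. if walks_meet d y s t n then 1 else 0)"

definition meet_prob :: "nat \<Rightarrow> nat \<Rightarrow> (nat \<Rightarrow> int) \<Rightarrow> real" where
  "meet_prob d m y =
     (\<Sum>s\<in>walks d m. \<Sum>t\<in>walks d m. if walks_meet d y s t m then 1 else 0) / num_steps d ^ (2 * m)"

definition meeting_mgf :: "nat \<Rightarrow> real \<Rightarrow> nat \<Rightarrow> (nat \<Rightarrow> int) \<Rightarrow> real" where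
  "meeting_mgf d b N y =
     (\<Sum>s\<in>walks d N. \<Sum>t\<in>walks d N. b ^ meeting_count d N y s t) / num_steps d ^ (2 * N)"

abbreviation origin :: "nat \<Rightarrow> int" where
  "origin \<equiv> \<lambda>_. 0"

lemma walks_meet_Cons [simp]:
  "walks_meet d y (e # s) (e' # t) (Suc n) = walks_meet d (offset_step y e e') s t n"
  by (auto simp: walks_meet_def offset_step_def algebra_simps)

lemma walks_meet_0 [simp]: "walks_meet d y s t 0 \<longleftrightarrow> (\<forall>i<d. y i = 0)"
  by (simp add: walks_meet_def)

lemma meeting_mgf_cong:
  "(\<And>i. i < d \<Longrightarrow> y i = y' i) \<Longrightarrow> meeting_mgf d b N y = meeting_mgf d b N y'"
  unfolding meeting_mgf_def meeting_count_def walks_meet_def by simp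

lemma meeting_count_0 [simp]: "meeting_count d 0 y s t = 0"
  by (simp add: meeting_count_def)

lemma meeting_count_Cons:
  "meeting_count d (Suc N) y (e # s) (e' # t) =
     (if \<forall>i<d. offset_step y e e' i = 0 then 1 else 0) + meeting_count d N (offset_step y e e') s t"
proof -
  let ?c = "\<lambda>n. if walks_meet d (offset_step y e e') s t n then 1 else 0"
  have "meeting_count d (Suc N) y (e # s) (e' # t) =
      (\<Sum>n=Suc 0..Suc N. if walks_meet d y (e # s) (e' # t) n then 1 else 0)"
    by (simp add: meeting_count_def)
  also have "\<dots> = (\<Sum>n=0..N. if walks_meet d y (e # s) (e' # t) (Suc n) then 1 else 0)"
    by (rule sum.shift_bounds_cl_Suc_ivl)
  also have "\<dots> = (\<Sum>n=0..N. ?c n)"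
    by simp
  also have "\<dots> = ?c 0 + (\<Sum>n=Suc 0..N. ?c n)"
    by (rule sum.atLeast_Suc_atMost) simp
  finally show ?thesis by (simp add: meeting_count_def)
qed

lemma meet_prob_0: "meet_prob d 0 y = (if \<forall>i<d. y i = 0 then 1 else 0)"
  by (simp add: meet_prob_def)

lemma meet_prob_Suc:
  "meet_prob d (Suc m) y =
     (\<Sum>e\<in>unit_steps d. \<Sum>e'\<in>unit_steps d. meet_prob d m (offset_step y e e')) / num_steps d ^ 2"
proof -
  have "meet_prob d (Suc m) y = (\<Sum>e\<in>unit_steps d. \<Sum>e'\<in>unit_steps d. \<Sum>s\<in>walks d m. \<Sum>t\<in>walks d m.
      if walks_meet d (offset_step y e e') s t m then 1 else 0) / (num_steps d ^ (2 * m) * num_steps d ^ 2)"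
    unfolding meet_prob_def sum2_walks_Suc by (simp add: power_add[symmetric])
  also have "\<dots> = (\<Sum>e\<in>unit_steps d. \<Sum>e'\<in>unit_steps d. meet_prob d m (offset_step y e e')) / num_steps d ^ 2"
    unfolding meet_prob_def sum_divide_distrib[symmetric] by (simp add: divide_divide_eq_left')
  finally show ?thesis .
qed

lemma meet_prob_nonneg: "meet_prob d m y \<ge> 0"
  unfolding meet_prob_def by (intro divide_nonneg_nonneg sum_nonneg) (auto simp: num_steps_def)

definition expected_meetings :: "nat \<Rightarrow> nat \<Rightarrow> real" where
  "expected_meetings d N = (\<Sum>m=1..N. meet_prob d m origin)"

lemma expected_meetings_nonneg: "expected_meetings d N \<ge> 0"
  unfolding expected_meetings_def by (intro sum_nonneg meet_prob_nonneg)

lemma meeting_mgf_0 [simp]: "meeting_mgf d b 0 y = 1"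
  by (simp add: meeting_mgf_def)

lemma meeting_mgf_Suc:
  "meeting_mgf d b (Suc N) y = (\<Sum>e\<in>unit_steps d. \<Sum>e'\<in>unit_steps d.
     b ^ (if \<forall>i<d. offset_step y e e' i = 0 then 1 else 0) * meeting_mgf d b N (offset_step y e e'))
     / num_steps d ^ 2"
proof -
  have "meeting_mgf d b (Suc N) y = (\<Sum>e\<in>unit_steps d. \<Sum>e'\<in>unit_steps d. \<Sum>s\<in>walks d N. \<Sum>t\<in>walks d N.
      b ^ (if \<forall>i<d. offset_step y e e' i = 0 then 1 else 0) * b ^ meeting_count d N (offset_step y e e') s t)
      / (num_steps d ^ (2 * N) * num_steps d ^ 2)"
    unfolding meeting_mgf_def sum2_walks_Suc by (simp add: power_add[symmetric] meeting_count_Cons)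
  also have "\<dots> = (\<Sum>e\<in>unit_steps d. \<Sum>e'\<in>unit_steps d.
      b ^ (if \<forall>i<d. offset_step y e e' i = 0 then 1 else 0) * meeting_mgf d b N (offset_step y e e'))
      / num_steps d ^ 2"
    unfolding meeting_mgf_def times_divide_eq_right sum_divide_distrib[symmetric]
    by (simp add: divide_divide_eq_left sum_distrib_left)
  finally show ?thesis .
qed

lemma meeting_mgf_nonneg: "b \<ge> 0 \<Longrightarrow> meeting_mgf d b N y \<ge> 0"
  unfolding meeting_mgf_def by (intro divide_nonneg_nonneg sum_nonneg) (auto simp: num_steps_def)

lemma meeting_mgf_Suc_first_meeting:
  assumes K: "num_steps d > 0"
  shows "meeting_mgf d b (Suc N) y =
    (\<Sum>e\<in>unit_steps d. \<Sum>e'\<in>unit_steps d. meeting_mgf d b N (offset_step y e e')) / num_steps d ^ 2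
    + (b - 1) * meet_prob d 1 y * meeting_mgf d b N origin"
proof -
  let ?U = "unit_steps d" and ?y' = "offset_step y"
  have split: "b ^ (if \<forall>i<d. ?y' e e' i = 0 then 1 else 0) * meeting_mgf d b N (?y' e e') =
      meeting_mgf d b N (?y' e e') + (b - 1) * (meet_prob d 0 (?y' e e') * meeting_mgf d b N origin)"
    for e e'
  proof (cases "\<forall>i<d. ?y' e e' i = 0")
    case True
    then have "meeting_mgf d b N (?y' e e') = meeting_mgf d b N origin"
      by (intro meeting_mgf_cong) auto
    with True show ?thesis by (simp add: meet_prob_0 algebra_simps)
  qed (auto simp: meet_prob_0)
  have "(\<Sum>e\<in>?U. \<Sum>e'\<in>?U. (b - 1) * (meet_prob d 0 (?y' e e') * meeting_mgf d b N origin)) =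
      (b - 1) * (\<Sum>e\<in>?U. \<Sum>e'\<in>?U. meet_prob d 0 (?y' e e')) * meeting_mgf d b N origin"
    by (simp add: sum_distrib_left sum_distrib_right ac_simps)
  then have "meeting_mgf d b (Suc N) y =
      (\<Sum>e\<in>?U. \<Sum>e'\<in>?U. meeting_mgf d b N (?y' e e')) / num_steps d ^ 2
      + (b - 1) * ((\<Sum>e\<in>?U. \<Sum>e'\<in>?U. meet_prob d 0 (?y' e e')) / num_steps d ^ 2) * meeting_mgf d b N origin"
    unfolding meeting_mgf_Suc split sum.distrib add_divide_distrib by simp
  also have "(\<Sum>e\<in>?U. \<Sum>e'\<in>?U. meet_prob d 0 (?y' e e')) / num_steps d ^ 2 = meet_prob d 1 y"
    using meet_prob_Suc[of d 0 y] by simp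
  finally show ?thesis .
qed

text \<open>Renewal identity: each meeting at time \<open>m\<close> contributes a factor \<open>b\<close>, after which the
  pair of walks starts afresh from offset \<open>0\<close>.\<close>

lemma meeting_mgf_renewal:
  assumes K: "num_steps d > 0"
  shows "meeting_mgf d b N y = 1 + (b - 1) * (\<Sum>m=1..N. meet_prob d m y * meeting_mgf d b (N - m) origin)"
proof (induction N arbitrary: y)
  case (Suc N)
  let ?U = "unit_steps d"
  define R where "R m = meeting_mgf d b (N - m) origin" for m
  have avg: "(\<Sum>e\<in>?U. \<Sum>e'\<in>?U. a) / num_steps d ^ 2 = a" for a :: real
    using K by (simp add: num_steps_def power2_eq_square)
  have swap: "(\<Sum>e\<in>?U. \<Sum>e'\<in>?U. \<Sum>m\<in>M. g m e e') = (\<Sum>m\<in>M. \<Sum>e\<in>?U. \<Sum>e'\<in>?U. g m e e')"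
    for M and g :: "nat \<Rightarrow> int list \<Rightarrow> int list \<Rightarrow> real"
  proof -
    have "(\<Sum>e\<in>?U. \<Sum>e'\<in>?U. \<Sum>m\<in>M. g m e e') = (\<Sum>e\<in>?U. \<Sum>m\<in>M. \<Sum>e'\<in>?U. g m e e')"
      by (rule sum.cong[OF refl]) (rule sum.swap)
    also have "\<dots> = (\<Sum>m\<in>M. \<Sum>e\<in>?U. \<Sum>e'\<in>?U. g m e e')"
      by (rule sum.swap)
    finally show ?thesis .
  qed
  have "(\<Sum>e\<in>?U. \<Sum>e'\<in>?U. meeting_mgf d b N (offset_step y e e')) =
      (\<Sum>e\<in>?U. \<Sum>e'\<in>?U. 1) +
      (b - 1) * (\<Sum>m=1..N. (\<Sum>e\<in>?U. \<Sum>e'\<in>?U. meet_prob d m (offset_step y e e')) * R m)"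
    unfolding Suc.IH R_def[symmetric]
    by (simp add: sum.distrib sum_distrib_left sum_distrib_right swap algebra_simps)
  then have "(\<Sum>e\<in>?U. \<Sum>e'\<in>?U. meeting_mgf d b N (offset_step y e e')) / num_steps d ^ 2 =
      1 + (b - 1) * (\<Sum>m=1..N. meet_prob d (Suc m) y * R m)"
    using K by (simp add: meet_prob_Suc add_divide_distrib sum_divide_distrib avg
       sum_distrib_left sum_distrib_right algebra_simps) (simp add: num_steps_def power2_eq_square)
  then have "meeting_mgf d b (Suc N) y =
      1 + (b - 1) * (meet_prob d 1 y * R 0 + (\<Sum>m=1..N. meet_prob d (Suc m) y * R m))"
    unfolding meeting_mgf_Suc_first_meeting[OF K] by (simp add: R_def algebra_simps)
  also have "meet_prob d 1 y * R 0 + (\<Sum>m=1..N. meet_prob d (Suc m) y * R m) =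
      (\<Sum>m=1..Suc N. meet_prob d m y * meeting_mgf d b (Suc N - m) origin)"
  proof -
    have "(\<Sum>m=Suc 1..Suc N. meet_prob d m y * meeting_mgf d b (Suc N - m) origin) =
        (\<Sum>m=1..N. meet_prob d (Suc m) y * R m)"
      unfolding sum.shift_bounds_cl_Suc_ivl by (simp add: R_def)
    then show ?thesis
      by (subst sum.atLeast_Suc_atMost) (auto simp: R_def)
  qed
  finally show ?case .
qed simp

lemma meeting_mgf_ge_1:
  assumes "num_steps d > 0" "b \<ge> 1"
  shows "meeting_mgf d b N y \<ge> 1"
proof -
  have "(b - 1) * (\<Sum>m=1..N. meet_prob d m y * meeting_mgf d b (N - m) origin) \<ge> 0"
    using assms by (intro mult_nonneg_nonneg sum_nonneg meet_prob_nonneg meeting_mgf_nonneg) auto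
  then show ?thesis using meeting_mgf_renewal[OF assms(1), of b N y] by simp
qed

lemma meeting_mgf_origin_le:
  assumes K: "num_steps d > 0" and b: "b \<ge> 1"
    and small: "(b - 1) * expected_meetings d N < 1"
    and "j \<le> N"
  shows "meeting_mgf d b j origin \<le> 1 / (1 - (b - 1) * expected_meetings d N)"
  using \<open>j \<le> N\<close>
proof (induction j rule: less_induct)
  case (less j)
  define a where "a = (b - 1) * expected_meetings d N"
  define R where "R = 1 / (1 - a)"
  have R0: "R \<ge> 0" using small by (simp add: R_def a_def)
  have "meeting_mgf d b j origin =
      1 + (b - 1) * (\<Sum>m=1..j. meet_prob d m origin * meeting_mgf d b (j - m) origin)"
    by (rule meeting_mgf_renewal[OF K])
  also have "\<dots> \<le> 1 + (b - 1) * (\<Sum>m=1..j. meet_prob d m origin * R)"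
    using b less by (intro add_left_mono mult_left_mono sum_mono meet_prob_nonneg)
      (auto simp: R_def a_def)
  also have "\<dots> \<le> 1 + (b - 1) * (\<Sum>m=1..N. meet_prob d m origin * R)"
    using b less.prems R0
    by (intro add_left_mono mult_left_mono sum_mono2) (auto intro: mult_nonneg_nonneg meet_prob_nonneg)
  also have "\<dots> = 1 + a * R"
    by (simp add: a_def expected_meetings_def sum_distrib_right)
  also have "\<dots> = R"
    using small by (simp add: R_def a_def field_simps)
  finally show ?case by (simp add: R_def a_def)
qed

lemma meeting_mgf_origin_sub_1_le:
  assumes K: "num_steps d > 0" and b: "b \<ge> 1"
    and small: "(b - 1) * expected_meetings d N \<le> 1 / 2"
  shows "meeting_mgf d b N origin - 1 \<le> 2 * ((b - 1) * expected_meetings d N)"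
proof -
  define a where "a = (b - 1) * expected_meetings d N"
  have "0 \<le> a" "a \<le> 1 / 2"
    using b small by (auto simp: a_def intro: mult_nonneg_nonneg expected_meetings_nonneg)
  have "meeting_mgf d b N origin \<le> 1 / (1 - a)"
    using meeting_mgf_origin_le[OF K b, of N N] \<open>a \<le> 1 / 2\<close> by (simp add: a_def)
  also have "\<dots> \<le> 1 + 2 * a"
    using \<open>0 \<le> a\<close> \<open>a \<le> 1 / 2\<close> by (simp add: divide_simps) (simp add: algebra_simps mult_left_le)
  finally show ?thesis by (simp add: a_def)
qed

section \<open>Meetings in dimensions one and two\<close>

definition int_choose :: "nat \<Rightarrow> int \<Rightarrow> nat" where
  "int_choose n j = (if j < 0 then 0 else n choose nat j)"

lemma int_choose_Suc: "int_choose (Suc n) (j + 1) = int_choose n j + int_choose n (j + 1)"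
proof (cases "j < 0")
  case True
  then show ?thesis by (cases "j = -1") (auto simp: int_choose_def)
next
  case False
  then have "nat (j + 1) = Suc (nat j)" by simp
  with False show ?thesis by (simp add: int_choose_def)
qed

definition binom_walk_prob :: "nat \<Rightarrow> int \<Rightarrow> real" where
  "binom_walk_prob m k = real (int_choose (2 * m) (int m + k)) / 4 ^ m"

lemma binom_walk_prob_0: "binom_walk_prob 0 k = (if k = 0 then 1 else 0)"
  by (auto simp: binom_walk_prob_def int_choose_def)

lemma binom_walk_prob_Suc:
  "binom_walk_prob (Suc m) k =
     (binom_walk_prob m (k - 1) + 2 * binom_walk_prob m k + binom_walk_prob m (k + 1)) / 4"
proof -
  have "int_choose (2 * Suc m) (int (Suc m) + k) = int_choose (Suc (Suc (2 * m))) ((int m + k) + 1)"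
    by (simp add: algebra_simps)
  also have "\<dots> = int_choose (Suc (2 * m)) (int m + k) + int_choose (Suc (2 * m)) ((int m + k) + 1)"
    by (rule int_choose_Suc)
  also have "int_choose (Suc (2 * m)) (int m + k) = int_choose (Suc (2 * m)) ((int m + (k - 1)) + 1)"
    by simp
  also have "\<dots> = int_choose (2 * m) (int m + (k - 1)) + int_choose (2 * m) (int m + k)"
    by (subst int_choose_Suc) simp
  also have "int_choose (Suc (2 * m)) ((int m + k) + 1) =
      int_choose (2 * m) (int m + k) + int_choose (2 * m) (int m + (k + 1))"
    by (subst int_choose_Suc) (simp add: add.assoc)
  finally show ?thesis
    by (simp add: binom_walk_prob_def field_simps)
qed

lemma Suc_times_central_binomial:
  "Suc m * (Suc (Suc (2 * m)) choose Suc m) = 2 * Suc (2 * m) * ((2 * m) choose m)"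
proof -
  have symm: "Suc (2 * m) choose m = Suc (2 * m) choose Suc m"
    using binomial_symmetric[of m "Suc (2 * m)"] by (simp add: Suc_diff_le)
  have double: "Suc (Suc (2 * m)) = 2 * Suc m" by simp
  have "Suc m * (Suc (Suc (2 * m)) choose Suc m) = Suc (Suc (2 * m)) * (Suc (2 * m) choose m)"
    by (rule Suc_times_binomial)
  also have "\<dots> = 2 * (Suc m * (Suc (2 * m) choose Suc m))"
    by (simp only: symm double mult.assoc)
  also have "\<dots> = 2 * Suc (2 * m) * ((2 * m) choose m)"
    by (simp only: Suc_times_binomial mult.assoc)
  finally show ?thesis .
qed

lemma binom_walk_prob_0_Suc:
  "binom_walk_prob (Suc m) 0 = binom_walk_prob m 0 * (2 * m + 1) / (2 * m + 2)"
proof -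
  have "real (Suc m) * real (Suc (Suc (2 * m)) choose Suc m) =
      2 * real (Suc (2 * m)) * real ((2 * m) choose m)"
    using arg_cong[OF Suc_times_central_binomial, of real] by (simp only: of_nat_mult of_nat_numeral)
  then have "real (Suc (Suc (2 * m)) choose Suc m) = 2 * (2 * m + 1) * real ((2 * m) choose m) / (m + 1)"
    by (simp add: field_simps del: binomial_Suc_Suc)
  moreover have "int_choose (2 * Suc m) (int (Suc m) + 0) = Suc (Suc (2 * m)) choose Suc m"
    by (simp only: int_choose_def) (simp del: binomial_Suc_Suc of_nat_Suc)
  moreover have "int_choose (2 * m) (int m + 0) = (2 * m) choose m"
    by (simp add: int_choose_def)
  ultimately show ?thesis
    unfolding binom_walk_prob_def by (simp add: divide_simps) (simp add: algebra_simps)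
qed

lemma binom_walk_prob_0_sq_le: "binom_walk_prob m 0 ^ 2 \<le> 1 / (2 * m + 1)"
proof (induction m)
  case 0
  then show ?case by (simp add: binom_walk_prob_0)
next
  case (Suc m)
  have "binom_walk_prob (Suc m) 0 ^ 2 = binom_walk_prob m 0 ^ 2 * ((2 * m + 1) / (2 * m + 2)) ^ 2"
    by (simp add: binom_walk_prob_0_Suc power_mult_distrib power_divide)
  also have "\<dots> \<le> 1 / (2 * m + 1) * ((2 * m + 1) / (2 * m + 2)) ^ 2"
    using Suc.IH by (intro mult_right_mono) (simp_all add: add.commute)
  also have "\<dots> = (2 * m + 1) / (2 * m + 2) ^ 2"
  proof -
    have q: "4 + (real m * 8 + real m * (real m * 4)) \<noteq> 0"
      by (smt (verit) mult_nonneg_nonneg of_nat_0_le_iff)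
    show ?thesis using q by (simp add: power2_eq_square divide_simps) (simp add: algebra_simps)
  qed
  also have "\<dots> \<le> 1 / (2 * Suc m + 1)"
    by (simp add: divide_simps power2_eq_square algebra_simps add_pos_nonneg)
  finally show ?case by simp
qed

lemma binom_walk_prob_0_sq_le_inverse: "m \<ge> 1 \<Longrightarrow> binom_walk_prob m 0 ^ 2 \<le> 1 / real m"
proof -
  assume m: "m \<ge> 1"
  have "binom_walk_prob m 0 ^ 2 \<le> 1 / (2 * m + 1)"
    using binom_walk_prob_0_sq_le[of m] by (simp add: add.commute)
  also have "\<dots> \<le> 1 / real m" using m by (simp add: divide_simps)
  finally show ?thesis .
qed

lemma binom_walk_prob_0_le: "m \<ge> 1 \<Longrightarrow> binom_walk_prob m 0 \<le> 1 / sqrt (real m)"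
  using binom_walk_prob_0_sq_le_inverse[of m]
  by (intro power2_le_imp_le[of "binom_walk_prob m 0"]) (simp_all add: power_divide)

text \<open>Law at time \<open>m\<close> of the difference of two independent simple walks on \<open>\<int>\<close>, i.e. of the walk
  with steps \<open>\<plusminus>2\<close> (probability \<open>1/4\<close> each) and \<open>0\<close> (probability \<open>1/2\<close>).\<close>

definition diff_walk_prob :: "nat \<Rightarrow> int \<Rightarrow> real" where
  "diff_walk_prob m a = (if even a then binom_walk_prob m (a div 2) else 0)"

lemma diff_walk_prob_0: "diff_walk_prob 0 a = (if a = 0 then 1 else 0)"
  by (auto simp: diff_walk_prob_def binom_walk_prob_0)

lemma diff_walk_prob_Suc:
  "diff_walk_prob (Suc m) a = (2 * diff_walk_prob m a + diff_walk_prob m (a + 2) + diff_walk_prob m (a - 2)) / 4"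
proof (cases "even a")
  case True
  then obtain k where a: "a = 2 * k" by blast
  have plus: "a + 2 = 2 * (k + 1)" and minus: "a - 2 = 2 * (k - 1)" using a by auto
  show ?thesis
    unfolding diff_walk_prob_def plus minus using a by (simp add: binom_walk_prob_Suc algebra_simps)
qed (simp add: diff_walk_prob_def)

lemma meet_prob_1: "meet_prob 1 m y = diff_walk_prob m (y 0)"
proof (induction m arbitrary: y)
  case 0
  show ?case by (simp add: meet_prob_0 diff_walk_prob_0)
next
  case (Suc m)
  show ?case
    unfolding meet_prob_Suc unit_steps_1 num_steps_1 Suc.IH
    by (simp add: offset_step_def diff_walk_prob_Suc algebra_simps)
qed

text \<open>In the rotated coordinates \<open>y\<^sub>0 + y\<^sub>1, y\<^sub>0 - y\<^sub>1\<close> the planar difference walk splits into two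
  independent copies of the one-dimensional one.\<close>

lemma meet_prob_2: "meet_prob 2 m y = diff_walk_prob m (y 0 + y 1) * diff_walk_prob m (y 0 - y 1)"
proof (induction m arbitrary: y)
  case 0
  have "(\<forall>i<2. y i = 0) \<longleftrightarrow> y 0 = 0 \<and> y 1 = 0" by (auto simp: less_2_cases_iff)
  then show ?case by (auto simp: meet_prob_0 diff_walk_prob_0)
next
  case (Suc m)
  show ?case
    unfolding meet_prob_Suc unit_steps_2 num_steps_2 Suc.IH
    by (simp add: offset_step_def diff_walk_prob_Suc algebra_simps)
qed

lemma sum_inverse_sqrt_le: "(\<Sum>m=1..N. 1 / sqrt (real m)) \<le> 2 * sqrt (real N)"
proof (induction N)
  case (Suc N)
  define s where "s = sqrt (real N)"
  define t where "t = sqrt (real (Suc N))"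
  have "t > 0" "t ^ 2 = s ^ 2 + 1" by (simp_all add: s_def t_def)
  moreover have "0 \<le> (t - s) ^ 2" by simp
  ultimately have "1 / t \<le> 2 * t - 2 * s"
    by (simp add: divide_simps power2_eq_square algebra_simps)
  then show ?case using Suc.IH by (simp add: s_def t_def)
qed simp

lemma sum_inverse_le_1_plus_ln: "N \<ge> 1 \<Longrightarrow> (\<Sum>m=1..N. 1 / real m) \<le> 1 + ln (real N)"
proof (induction N rule: dec_induct)
  case (step N)
  have N: "real N > 0" using step by simp
  have "ln (real N / real (Suc N)) \<le> real N / real (Suc N) - 1"
    using N by (intro ln_le_minus_one) simp
  also have "\<dots> = - 1 / real (Suc N)" by (simp add: field_simps)
  finally have "1 / real (Suc N) \<le> ln (real (Suc N)) - ln (real N)"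
    using N by (simp add: ln_div)
  then show ?case using step.IH by simp
qed simp

lemma expected_meetings_1_le: "expected_meetings 1 N \<le> 2 * sqrt (real N)"
proof -
  have "expected_meetings 1 N \<le> (\<Sum>m=1..N. 1 / sqrt (real m))"
    unfolding expected_meetings_def meet_prob_1
    by (intro sum_mono) (auto simp: diff_walk_prob_def intro: binom_walk_prob_0_le)
  also have "\<dots> \<le> 2 * sqrt (real N)" by (rule sum_inverse_sqrt_le)
  finally show ?thesis .
qed

lemma expected_meetings_2_le: "N \<ge> 1 \<Longrightarrow> expected_meetings 2 N \<le> 1 + ln (real N)"
proof -
  assume N: "N \<ge> 1"
  have "expected_meetings 2 N \<le> (\<Sum>m=1..N. 1 / real m)"
    unfolding expected_meetings_def meet_prob_2
    by (intro sum_mono) (auto simp: diff_walk_prob_def power2_eq_square[symmetric]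
        intro: binom_walk_prob_0_sq_le_inverse)
  also have "\<dots> \<le> 1 + ln (real N)" by (rule sum_inverse_le_1_plus_ln[OF N])
  finally show ?thesis .
qed

lemma coupling_sq_tendsto_0:
  fixes c :: "nat \<Rightarrow> real"
  assumes d: "d \<in> {1, 2}"
    and c1: "d = 1 \<Longrightarrow> (\<lambda>N. (c N)\<^sup>2 * sqrt (real N)) \<longlonglongrightarrow> 0"
    and c2: "d = 2 \<Longrightarrow> (\<lambda>N. (c N)\<^sup>2 * ln (real N)) \<longlonglongrightarrow> 0"
  shows "(\<lambda>N. (c N)\<^sup>2) \<longlonglongrightarrow> 0"
proof (cases "d = 1")
  case True
  show ?thesis
  proof (rule tendsto_sandwich[OF _ _ tendsto_const c1[OF True]])
    show "\<forall>\<^sub>F N in sequentially. 0 \<le> (c N)\<^sup>2" by simp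
    show "\<forall>\<^sub>F N in sequentially. (c N)\<^sup>2 \<le> (c N)\<^sup>2 * sqrt (real N)"
      using eventually_ge_at_top[of 1]
      by eventually_elim (intro mult_le_cancel_left1[THEN iffD2]; simp)
  qed
next
  case False
  with d have d2: "d = 2" by auto
  show ?thesis
  proof (rule tendsto_sandwich[OF _ _ tendsto_const c2[OF d2]])
    show "\<forall>\<^sub>F N in sequentially. 0 \<le> (c N)\<^sup>2" by simp
    show "\<forall>\<^sub>F N in sequentially. (c N)\<^sup>2 \<le> (c N)\<^sup>2 * ln (real N)"
      using eventually_ge_at_top[of 3]
    proof eventually_elim
      case (elim N)
      have "exp 1 \<le> (3::real)" by (rule exp_le)
      also have "3 \<le> real N" using elim by simp
      finally have "1 \<le> ln (real N)"
        using ln_le_cancel_iff[of "exp 1" "real N"] elim by simp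
      then show ?case by (intro mult_le_cancel_left1[THEN iffD2]) simp
    qed
  qed
qed

lemma coupling_sq_expected_meetings_tendsto_0:
  fixes c :: "nat \<Rightarrow> real"
  assumes d: "d \<in> {1, 2}"
    and c1: "d = 1 \<Longrightarrow> (\<lambda>N. (c N)\<^sup>2 * sqrt (real N)) \<longlonglongrightarrow> 0"
    and c2: "d = 2 \<Longrightarrow> (\<lambda>N. (c N)\<^sup>2 * ln (real N)) \<longlonglongrightarrow> 0"
  shows "(\<lambda>N. (c N)\<^sup>2 * expected_meetings d N) \<longlonglongrightarrow> 0"
proof (cases "d = 1")
  case True
  have lim: "(\<lambda>N. 2 * ((c N)\<^sup>2 * sqrt (real N))) \<longlonglongrightarrow> 0"
    using tendsto_mult_right_zero[OF c1[OF True]] by simp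
  show ?thesis
  proof (rule tendsto_sandwich[OF _ _ tendsto_const lim])
    show "\<forall>\<^sub>F N in sequentially. 0 \<le> (c N)\<^sup>2 * expected_meetings d N"
      by (simp add: expected_meetings_nonneg)
    show "\<forall>\<^sub>F N in sequentially. (c N)\<^sup>2 * expected_meetings d N \<le> 2 * ((c N)\<^sup>2 * sqrt (real N))"
    proof (intro always_eventually allI)
      fix N
      show "(c N)\<^sup>2 * expected_meetings d N \<le> 2 * ((c N)\<^sup>2 * sqrt (real N))"
        using mult_left_mono[OF expected_meetings_1_le, of "(c N)\<^sup>2" N] True by simp
    qed
  qed
next
  case False
  with d have d2: "d = 2" by auto
  have lim: "(\<lambda>N. (c N)\<^sup>2 + (c N)\<^sup>2 * ln (real N)) \<longlonglongrightarrow> 0"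
    using tendsto_add[OF coupling_sq_tendsto_0[OF d c1 c2] c2[OF d2]] by simp
  show ?thesis
  proof (rule tendsto_sandwich[OF _ _ tendsto_const lim])
    show "\<forall>\<^sub>F N in sequentially. 0 \<le> (c N)\<^sup>2 * expected_meetings d N"
      by (simp add: expected_meetings_nonneg)
    show "\<forall>\<^sub>F N in sequentially. (c N)\<^sup>2 * expected_meetings d N \<le> (c N)\<^sup>2 + (c N)\<^sup>2 * ln (real N)"
      using eventually_ge_at_top[of 1]
    proof eventually_elim
      case (elim N)
      then show ?case
        using mult_left_mono[OF expected_meetings_2_le[OF elim], of "(c N)\<^sup>2"] d2
        by (simp add: algebra_simps)
    qed
  qed
qed

lemma meeting_mgf_tendsto_1:
  fixes c :: "nat \<Rightarrow> real"
  assumes d: "d \<in> {1, 2}"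
    and c1: "d = 1 \<Longrightarrow> (\<lambda>N. (c N)\<^sup>2 * sqrt (real N)) \<longlonglongrightarrow> 0"
    and c2: "d = 2 \<Longrightarrow> (\<lambda>N. (c N)\<^sup>2 * ln (real N)) \<longlonglongrightarrow> 0"
  shows "(\<lambda>N. meeting_mgf d ((1 + (c N)\<^sup>2)\<^sup>2) N origin - 1) \<longlonglongrightarrow> 0"
proof -
  define a where "a N = ((1 + (c N)\<^sup>2)\<^sup>2 - 1) * expected_meetings d N" for N
  have a_eq: "a N = (2 + (c N)\<^sup>2) * ((c N)\<^sup>2 * expected_meetings d N)" for N
    by (simp add: a_def power2_eq_square algebra_simps)
  have "a \<longlonglongrightarrow> (2 + 0) * 0"
    unfolding a_eq
    by (intro tendsto_intros coupling_sq_tendsto_0[OF d c1 c2]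
        coupling_sq_expected_meetings_tendsto_0[OF d c1 c2])
  then have a: "a \<longlonglongrightarrow> 0" by simp
  have b: "(1 + (c N)\<^sup>2)\<^sup>2 \<ge> 1" for N by (simp add: one_le_power)
  show ?thesis
  proof (rule tendsto_sandwich[OF _ _ tendsto_const tendsto_mult_right_zero[OF a, of 2]])
    show "\<forall>\<^sub>F N in sequentially. 0 \<le> meeting_mgf d ((1 + (c N)\<^sup>2)\<^sup>2) N origin - 1"
      using meeting_mgf_ge_1[OF num_steps_pos[OF d] b] by simp
    have "\<forall>\<^sub>F N in sequentially. a N < 1 / 2"
      using a by (rule order_tendstoD) simp
    then show "\<forall>\<^sub>F N in sequentially. meeting_mgf d ((1 + (c N)\<^sup>2)\<^sup>2) N origin - 1 \<le> 2 * a N"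
      by eventually_elim (auto simp: a_def intro: meeting_mgf_origin_sub_1_le[OF num_steps_pos[OF d] b])
  qed
qed

section \<open>Moments of the endpoint\<close>

definition walk_mean :: "nat \<Rightarrow> nat \<Rightarrow> (nat \<Rightarrow> int) \<Rightarrow> ((nat \<Rightarrow> int) \<Rightarrow> real) \<Rightarrow> real" where
  "walk_mean d N y g = (\<Sum>s\<in>walks d N. g (\<lambda>i. y i + walk_coord s N i)) / num_steps d ^ N"

lemma walk_mean_0 [simp]: "walk_mean d 0 y g = g y"
  by (simp add: walk_mean_def)

lemma walk_mean_Suc:
  "walk_mean d (Suc N) y g = (\<Sum>e\<in>unit_steps d. walk_mean d N (\<lambda>i. y i + e ! i) g) / num_steps d"
  unfolding walk_mean_def sum_walks_Suc
  by (simp add: sum_divide_distrib[symmetric] divide_divide_eq_left add.assoc mult.commute)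

definition offset_sqnorm :: "nat \<Rightarrow> (nat \<Rightarrow> int) \<Rightarrow> real" where
  "offset_sqnorm d y = (\<Sum>i<d. real_of_int (y i) ^ 2)"

lemma offset_sqnorm_1: "offset_sqnorm (Suc 0) y = real_of_int (y 0) ^ 2"
  by (simp add: offset_sqnorm_def)

lemma offset_sqnorm_2: "offset_sqnorm 2 y = real_of_int (y 0) ^ 2 + real_of_int (y 1) ^ 2"
  by (simp add: offset_sqnorm_def numeral_2_eq_2)

lemma walk_mean_sqnorm:
  assumes "d \<in> {1, 2}"
  shows "walk_mean d N y (offset_sqnorm d) = offset_sqnorm d y + N"
proof (induction N arbitrary: y)
  case (Suc N)
  show ?case
  proof (cases "d = 1")
    case True
    show ?thesis unfolding True walk_mean_Suc unit_steps_1 num_steps_1 Suc.IH[unfolded True]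
      by (simp add: offset_sqnorm_1 power2_eq_square algebra_simps)
  next
    case False
    with assms have d: "d = 2" by auto
    show ?thesis unfolding d walk_mean_Suc unit_steps_2 num_steps_2 Suc.IH[unfolded d]
      by (simp add: offset_sqnorm_2 power2_eq_square algebra_simps)
  qed
qed simp

lemma neighbour_avg_sq_le_1d:
  fixes a K :: real
  assumes "K \<ge> 0"
  shows "(((a + 1)\<^sup>2 + K)\<^sup>2 + ((a - 1)\<^sup>2 + K)\<^sup>2) / 2 \<le> (a\<^sup>2 + K + 3)\<^sup>2"
proof -
  have "(((a + 1)\<^sup>2 + K)\<^sup>2 + ((a - 1)\<^sup>2 + K)\<^sup>2) / 2 = (a\<^sup>2 + 1 + K)\<^sup>2 + 4 * a\<^sup>2"
    by (simp add: power2_eq_square algebra_simps)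
  also have "\<dots> \<le> (a\<^sup>2 + 1 + K)\<^sup>2 + 4 * (a\<^sup>2 + 1 + K) + 4"
    using assms by simp
  also have "\<dots> = (a\<^sup>2 + K + 3)\<^sup>2"
    by (simp add: power2_eq_square algebra_simps)
  finally show ?thesis .
qed

lemma neighbour_avg_sq_le_2d:
  fixes a b K :: real
  assumes "K \<ge> 0"
  shows "(((a + 1)\<^sup>2 + b\<^sup>2 + K)\<^sup>2 + ((a - 1)\<^sup>2 + b\<^sup>2 + K)\<^sup>2 + (a\<^sup>2 + (b + 1)\<^sup>2 + K)\<^sup>2
      + (a\<^sup>2 + (b - 1)\<^sup>2 + K)\<^sup>2) / 4 \<le> (a\<^sup>2 + b\<^sup>2 + K + 3)\<^sup>2"
proof -
  have "(((a + 1)\<^sup>2 + b\<^sup>2 + K)\<^sup>2 + ((a - 1)\<^sup>2 + b\<^sup>2 + K)\<^sup>2 + (a\<^sup>2 + (b + 1)\<^sup>2 + K)\<^sup>2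
      + (a\<^sup>2 + (b - 1)\<^sup>2 + K)\<^sup>2) / 4 = (a\<^sup>2 + b\<^sup>2 + 1 + K)\<^sup>2 + 2 * (a\<^sup>2 + b\<^sup>2)"
    by (simp add: power2_eq_square algebra_simps)
  also have "\<dots> \<le> (a\<^sup>2 + b\<^sup>2 + 1 + K)\<^sup>2 + 4 * (a\<^sup>2 + b\<^sup>2 + 1 + K) + 4"
    using assms by simp
  also have "\<dots> = (a\<^sup>2 + b\<^sup>2 + K + 3)\<^sup>2"
    by (simp add: power2_eq_square algebra_simps)
  finally show ?thesis .
qed

lemma walk_mean_sqnorm_sq_le:
  assumes d: "d \<in> {1, 2}"
  shows "walk_mean d N y (\<lambda>z. offset_sqnorm d z ^ 2) \<le> (offset_sqnorm d y + 3 * N) ^ 2"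
proof (induction N arbitrary: y)
  case (Suc N)
  have "walk_mean d (Suc N) y (\<lambda>z. offset_sqnorm d z ^ 2) \<le>
      (\<Sum>e\<in>unit_steps d. (offset_sqnorm d (\<lambda>i. y i + e ! i) + 3 * N) ^ 2) / num_steps d"
    unfolding walk_mean_Suc using num_steps_pos[OF d] by (intro divide_right_mono sum_mono Suc.IH) auto
  also have "\<dots> \<le> (offset_sqnorm d y + 3 * Suc N) ^ 2"
  proof (cases "d = 1")
    case True
    show ?thesis unfolding True unit_steps_1 num_steps_1
      using neighbour_avg_sq_le_1d[of "3 * real N" "real_of_int (y 0)"]
      by (simp add: offset_sqnorm_1 algebra_simps)
  next
    case False
    with d have d2: "d = 2" by auto
    show ?thesis unfolding d2 unit_steps_2 num_steps_2
      using neighbour_avg_sq_le_2d[of "3 * real N" "real_of_int (y 0)" "real_of_int (y 1)"]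
      by (simp add: offset_sqnorm_2 algebra_simps)
  qed
  finally show ?case .
qed simp

lemma sqnorm_walk_pos_eq_offset_sqnorm:
  "sqnorm (walk_pos d s N) = offset_sqnorm d (\<lambda>i. origin i + walk_coord s N i)"
  by (simp add: sqnorm_walk_pos offset_sqnorm_def)

lemma mean_sqnorm_endpoint:
  assumes "d \<in> {1, 2}"
  shows "(\<Sum>s\<in>walks d N. sqnorm (walk_pos d s N)) / num_steps d ^ N = real N"
  using walk_mean_sqnorm[OF assms, of N origin]
  unfolding walk_mean_def sqnorm_walk_pos_eq_offset_sqnorm by (simp add: offset_sqnorm_def)

lemma mean_sqnorm_endpoint_sq_le:
  assumes "d \<in> {1, 2}"
  shows "(\<Sum>s\<in>walks d N. sqnorm (walk_pos d s N) ^ 2) / num_steps d ^ N \<le> 9 * real N ^ 2"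
  using walk_mean_sqnorm_sq_le[OF assms, of N origin]
  unfolding walk_mean_def sqnorm_walk_pos_eq_offset_sqnorm by (simp add: offset_sqnorm_def power_mult_distrib)

lemma normalized_sqnorm_endpoint_moments:
  assumes d: "d \<in> {1, 2}" and N: "N \<ge> 1"
  shows "(\<Sum>s\<in>walks d N. sqnorm (walk_pos d s N) / real N) / num_steps d ^ N = 1"
    and "(\<Sum>s\<in>walks d N. (sqnorm (walk_pos d s N) / real N)\<^sup>2) / num_steps d ^ N \<le> 9"
proof -
  have N0: "real N > 0" using N by simp
  have "(\<Sum>s\<in>walks d N. sqnorm (walk_pos d s N) / real N) / num_steps d ^ N =
      ((\<Sum>s\<in>walks d N. sqnorm (walk_pos d s N)) / num_steps d ^ N) / real N"
    by (simp add: sum_divide_distrib[symmetric])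
  also have "\<dots> = 1"
    using mean_sqnorm_endpoint[OF d, of N] N0 by simp
  finally show "(\<Sum>s\<in>walks d N. sqnorm (walk_pos d s N) / real N) / num_steps d ^ N = 1" .
  have "(\<Sum>s\<in>walks d N. (sqnorm (walk_pos d s N) / real N)\<^sup>2) / num_steps d ^ N =
      ((\<Sum>s\<in>walks d N. (sqnorm (walk_pos d s N))\<^sup>2) / num_steps d ^ N) / (real N)\<^sup>2"
    by (simp add: power_divide sum_divide_distrib[symmetric])
  also have "\<dots> \<le> 9 * (real N)\<^sup>2 / (real N)\<^sup>2"
    using mean_sqnorm_endpoint_sq_le[OF d, of N] by (intro divide_right_mono) auto
  finally show "(\<Sum>s\<in>walks d N. (sqnorm (walk_pos d s N) / real N)\<^sup>2) / num_steps d ^ N \<le> 9"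
    using N0 by simp
qed

lemma double_sum_am_gm_le:
  fixes w :: "'a \<Rightarrow> real" and X :: "'a \<Rightarrow> 'a \<Rightarrow> real"
  assumes K: "K > 0" and \<delta>: "\<delta> > 0"
  shows "(\<Sum>s\<in>W. \<Sum>t\<in>W. w s * w t * X s t) / K\<^sup>2 \<le>
     (\<delta> * ((\<Sum>s\<in>W. (w s)\<^sup>2) / K)\<^sup>2 + ((\<Sum>s\<in>W. \<Sum>t\<in>W. (X s t)\<^sup>2) / K\<^sup>2) / \<delta>) / 2"
proof -
  have pointwise: "w s * w t * X s t \<le> (\<delta> * ((w s)\<^sup>2 * (w t)\<^sup>2) + (X s t)\<^sup>2 / \<delta>) / 2" for s t
  proof -
    have "0 \<le> (\<delta> * (w s * w t) - X s t)\<^sup>2 / \<delta>" using \<delta> by simp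
    also have "\<dots> = \<delta> * ((w s)\<^sup>2 * (w t)\<^sup>2) + (X s t)\<^sup>2 / \<delta> - 2 * (w s * w t * X s t)"
      using \<delta> by (simp add: power2_eq_square field_simps)
    finally show ?thesis by simp
  qed
  have "(\<Sum>s\<in>W. \<Sum>t\<in>W. w s * w t * X s t) \<le> (\<Sum>s\<in>W. \<Sum>t\<in>W. (\<delta> * ((w s)\<^sup>2 * (w t)\<^sup>2) + (X s t)\<^sup>2 / \<delta>) / 2)"
    by (intro sum_mono pointwise)
  also have "\<dots> = (\<delta> * (\<Sum>s\<in>W. (w s)\<^sup>2)\<^sup>2 + (\<Sum>s\<in>W. \<Sum>t\<in>W. (X s t)\<^sup>2) / \<delta>) / 2"
    by (simp add: sum.distrib sum_divide_distrib[symmetric] sum_distrib_left[symmetric] sum_product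
        add_divide_distrib power2_eq_square)
  finally have "(\<Sum>s\<in>W. \<Sum>t\<in>W. w s * w t * X s t) / K\<^sup>2 \<le>
      (\<delta> * (\<Sum>s\<in>W. (w s)\<^sup>2)\<^sup>2 + (\<Sum>s\<in>W. \<Sum>t\<in>W. (X s t)\<^sup>2) / \<delta>) / 2 / K\<^sup>2"
    using K by (intro divide_right_mono) auto
  also have "\<dots> = (\<delta> * ((\<Sum>s\<in>W. (w s)\<^sup>2) / K)\<^sup>2 + ((\<Sum>s\<in>W. \<Sum>t\<in>W. (X s t)\<^sup>2) / K\<^sup>2) / \<delta>) / 2"
    using K \<delta> by (simp add: power2_eq_square field_simps)
  finally show ?thesis .
qed

lemma weighted_sum_sub_1_sq:
  fixes w F :: "'a \<Rightarrow> real"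
  assumes "K \<noteq> 0"
  shows "((\<Sum>s\<in>W. w s * F s) / K - 1)\<^sup>2 =
    (\<Sum>s\<in>W. \<Sum>t\<in>W. (w s * w t / K\<^sup>2) * (F s * F t)) + (\<Sum>s\<in>W. (- 2 * w s / K) * F s) + 1"
proof -
  have "(\<Sum>s\<in>W. w s * F s)\<^sup>2 = (\<Sum>s\<in>W. \<Sum>t\<in>W. w s * w t * (F s * F t))"
    by (simp add: power2_eq_square sum_product algebra_simps)
  then show ?thesis
    unfolding power2_diff power_divide using assms
    by (simp add: sum_divide_distrib sum_distrib_left sum_distrib_right mult.assoc sum_negf)
qed

lemma weighted_double_sum_eq:
  fixes w :: "'a \<Rightarrow> real" and X :: "'a \<Rightarrow> 'a \<Rightarrow> real"
  shows "(\<Sum>s\<in>W. \<Sum>t\<in>W. (w s * w t / K\<^sup>2) * X s t) + (\<Sum>s\<in>W. - 2 * w s / K) + 1 =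
    (\<Sum>s\<in>W. \<Sum>t\<in>W. w s * w t * (X s t - 1)) / K\<^sup>2 + ((\<Sum>s\<in>W. w s) / K - 1)\<^sup>2"
proof -
  have "(\<Sum>s\<in>W. \<Sum>t\<in>W. (w s * w t / K\<^sup>2) * X s t) =
      (\<Sum>s\<in>W. \<Sum>t\<in>W. w s * w t * (X s t - 1)) / K\<^sup>2 + (\<Sum>s\<in>W. w s)\<^sup>2 / K\<^sup>2"
    by (simp add: power2_eq_square sum_product sum_divide_distrib[symmetric] sum.distrib[symmetric]
        add_divide_distrib[symmetric] algebra_simps)
  moreover have "(\<Sum>s\<in>W. - 2 * w s / K) = - 2 * (\<Sum>s\<in>W. w s) / K"
    by (simp add: sum_divide_distrib[symmetric] sum_distrib_left[symmetric] sum_negf)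
  ultimately show ?thesis
    unfolding power2_diff power_divide by simp
qed

lemma power_sub_1_sq_le:
  fixes x :: real
  assumes "x \<ge> 1"
  shows "(x ^ n - 1)\<^sup>2 \<le> (x\<^sup>2) ^ n - 1"
proof -
  have "x ^ n \<ge> 1" using assms by (rule one_le_power)
  moreover have "(x\<^sup>2) ^ n = (x ^ n)\<^sup>2" by (simp add: power_mult[symmetric] mult.commute)
  ultimately show ?thesis by (simp add: power2_eq_square algebra_simps)
qed

text \<open>Given \<open>a > 0\<close>, take \<open>\<delta> = a / C\<close> and then \<open>N\<close> so large that \<open>\<rho>\<^sub>N < a\<^sup>2 / C\<close>.\<close>

lemma tendsto_0_by_tradeoff:
  fixes E \<rho> :: "nat \<Rightarrow> real"
  assumes E0: "\<And>N. 0 \<le> E N"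
    and bound: "\<forall>\<^sub>F N in sequentially. \<forall>\<delta>>0. E N \<le> (\<delta> * C + \<rho> N / \<delta>) / 2"
    and C: "C > 0" and \<rho>: "\<rho> \<longlonglongrightarrow> 0"
  shows "E \<longlonglongrightarrow> 0"
proof (rule order_tendstoI)
  fix a :: real
  assume "a < 0"
  then show "\<forall>\<^sub>F N in sequentially. a < E N"
    using E0 by (intro always_eventually) (auto intro: less_le_trans)
next
  fix a :: real
  assume a: "0 < a"
  have "\<forall>\<^sub>F N in sequentially. \<rho> N < a\<^sup>2 / C"
    using \<rho> by (rule order_tendstoD) (use a C in simp)
  then show "\<forall>\<^sub>F N in sequentially. E N < a"
    using bound
  proof eventually_elim
    case (elim N)
    have "E N \<le> (a / C * C + \<rho> N / (a / C)) / 2"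
      using elim(2) a C by (meson divide_pos_pos)
    also have "\<rho> N / (a / C) < a"
      using elim(1) a C by (simp add: divide_simps power2_eq_square mult.commute)
    finally show ?case using C by simp
  qed
qed

lemma abs_divide_sub_1_le:
  fixes x y \<delta> :: real
  assumes "\<bar>x - 1\<bar> < \<delta>" "\<bar>y - 1\<bar> < \<delta>" "\<delta> \<le> 1 / 2"
  shows "\<bar>y / x - 1\<bar> \<le> 4 * \<delta>"
proof -
  have x: "x > 1 / 2" using assms by auto
  then have "\<bar>y / x - 1\<bar> = \<bar>y - x\<bar> / x" by (simp add: field_simps)
  also have "\<dots> \<le> (2 * \<delta>) / (1 / 2)"
    using assms x by (intro frac_le) auto
  finally show ?thesis by simp
qed

lemma (in prob_space) ratio_tendsto_1_in_prob:
  fixes X Y :: "nat \<Rightarrow> 'a \<Rightarrow> real"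
  assumes meas: "\<And>N. X N \<in> borel_measurable M" "\<And>N. Y N \<in> borel_measurable M"
    and X: "\<And>\<delta>. \<delta> > 0 \<Longrightarrow> (\<lambda>N. prob {x \<in> space M. \<delta> \<le> \<bar>X N x - 1\<bar>}) \<longlonglongrightarrow> 0"
    and Y: "\<And>\<delta>. \<delta> > 0 \<Longrightarrow> (\<lambda>N. prob {x \<in> space M. \<delta> \<le> \<bar>Y N x - 1\<bar>}) \<longlonglongrightarrow> 0"
    and \<epsilon>: "\<epsilon> > 0"
  shows "(\<lambda>N. prob {x \<in> space M. \<epsilon> < \<bar>Y N x / X N x - 1\<bar>}) \<longlonglongrightarrow> 0"
proof -
  define \<delta> where "\<delta> = min (1 / 2) (\<epsilon> / 8)"
  have \<delta>: "\<delta> > 0" "\<delta> \<le> 1 / 2" "4 * \<delta> < \<epsilon>" using \<epsilon> by (auto simp: \<delta>_def)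
  define A where "A N = {x \<in> space M. \<delta> \<le> \<bar>X N x - 1\<bar>}" for N
  define B where "B N = {x \<in> space M. \<delta> \<le> \<bar>Y N x - 1\<bar>}" for N
  have sets: "A N \<in> events" "B N \<in> events" for N
    unfolding A_def B_def using meas by measurable
  have "{x \<in> space M. \<epsilon> < \<bar>Y N x / X N x - 1\<bar>} \<subseteq> A N \<union> B N" for N
  proof
    fix x
    assume x: "x \<in> {x \<in> space M. \<epsilon> < \<bar>Y N x / X N x - 1\<bar>}"
    show "x \<in> A N \<union> B N"
    proof (rule ccontr)
      assume "x \<notin> A N \<union> B N"
      with x have "\<bar>X N x - 1\<bar> < \<delta>" "\<bar>Y N x - 1\<bar> < \<delta>" by (auto simp: A_def B_def)
      with \<delta> have "\<bar>Y N x / X N x - 1\<bar> \<le> 4 * \<delta>" by (intro abs_divide_sub_1_le) auto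
      with x \<delta> show False by auto
    qed
  qed
  then have le: "prob {x \<in> space M. \<epsilon> < \<bar>Y N x / X N x - 1\<bar>} \<le> prob (A N) + prob (B N)" for N
    using sets by (meson finite_measure_mono measure_Un_le order_trans sets.Un)
  have lim: "(\<lambda>N. prob (A N) + prob (B N)) \<longlonglongrightarrow> 0"
    using tendsto_add[OF X Y, OF \<delta>(1) \<delta>(1)] by (simp add: A_def B_def)
  show ?thesis
    by (rule tendsto_sandwich[OF _ _ tendsto_const lim]) (simp_all add: le)
qed

section \<open>Polymer weights\<close>

definition polymer_weight ::
  "nat \<Rightarrow> real \<Rightarrow> (nat \<Rightarrow> int list \<Rightarrow> 'q \<Rightarrow> real) \<Rightarrow> nat \<Rightarrow> int list list \<Rightarrow> 'q \<Rightarrow> real" where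
  "polymer_weight d c h N s q = (\<Prod>n=1..N. 1 + c * h n (walk_pos d s n) q)"

definition weighted_avg ::
  "nat \<Rightarrow> real \<Rightarrow> (nat \<Rightarrow> int list \<Rightarrow> 'q \<Rightarrow> real) \<Rightarrow> nat \<Rightarrow> (int list list \<Rightarrow> real) \<Rightarrow> 'q \<Rightarrow> real" where
  "weighted_avg d c h N w q = (\<Sum>s\<in>walks d N. w s * polymer_weight d c h N s q) / num_steps d ^ N"

lemma weighted_avg_divide: "weighted_avg d c h N (\<lambda>s. w s / a) q = weighted_avg d c h N w q / a"
  unfolding weighted_avg_def by (simp add: sum_divide_distrib[symmetric])

lemma sum_box_walk_pos:
  assumes "s \<in> walks d N"
  shows "(\<Sum>x\<in>box d N. if walk_pos d s N = x then f x else 0) = f (walk_pos d s N)"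
  using walk_pos_in_box[OF assms] finite_box by (simp add: sum.delta)

lemma sum_box_times_polymer_p:
  assumes "num_steps d = 2 * real d"
  shows "(\<Sum>x\<in>box d N. f x * polymer_p d c (\<lambda>n x. h n x q) N x) =
    weighted_avg d c h N (\<lambda>s. f (walk_pos d s N)) q"
proof -
  have p: "polymer_p d c (\<lambda>n x. h n x q) N x = (\<Sum>s\<in>walks d N.
      if walk_pos d s N = x then polymer_weight d c h N s q else 0) / num_steps d ^ N" for x
    unfolding polymer_p_def assms polymer_weight_def by (intro arg_cong2[where f="(/)"] sum.cong) auto
  have e: "f x * (if walk_pos d s N = x then F else 0) =
      (if walk_pos d s N = x then f (walk_pos d s N) * F else 0)" for x s F
    by auto
  have "(\<Sum>x\<in>box d N. f x * polymer_p d c (\<lambda>n x. h n x q) N x) = (\<Sum>s\<in>walks d N. \<Sum>x\<in>box d N.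
      if walk_pos d s N = x then f (walk_pos d s N) * polymer_weight d c h N s q else 0) / num_steps d ^ N"
    unfolding p sum_divide_distrib[symmetric] times_divide_eq_right sum_distrib_left e
    by (subst sum.swap) simp
  then show ?thesis
    unfolding weighted_avg_def by (simp add: sum_box_walk_pos)
qed

lemma mean_sq_disp_eq_ratio:
  assumes "num_steps d = 2 * real d"
  shows "mean_sq_disp d c (\<lambda>n x. h n x q) N =
    weighted_avg d c h N (\<lambda>s. sqnorm (walk_pos d s N)) q / weighted_avg d c h N (\<lambda>_. 1) q"
  using sum_box_times_polymer_p[OF assms, where f = sqnorm and c = c and h = h and q = q and N = N]
    sum_box_times_polymer_p[OF assms, where f = "\<lambda>_. 1" and c = c and h = h and q = q and N = N]
  unfolding mean_sq_disp_def polymer_pN_def partition_fn_def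
  by (simp add: sum_divide_distrib[symmetric])

text \<open>The graph \<open>{(n, \<omega>(n)) | 1 \<le> n \<le> N}\<close> of a walk: the environment variables its weight depends on.\<close>

definition graph_points :: "nat \<Rightarrow> nat \<Rightarrow> int list list \<Rightarrow> (nat \<times> int list) set" where
  "graph_points d N s = (\<lambda>n. (n, walk_pos d s n)) ` {1..N}"

lemma finite_graph_points: "finite (graph_points d N s)"
  by (simp add: graph_points_def)

lemma graph_points_subset: "graph_points d N s \<subseteq> UNIV \<times> lattice d"
  by (auto simp: graph_points_def walk_pos_in_lattice)

lemma card_graph_points_inter: "card (graph_points d N s \<inter> graph_points d N t) = meeting_count d N origin s t"
proof -
  have "graph_points d N s \<inter> graph_points d N t =
      (\<lambda>n. (n, walk_pos d s n)) ` {n\<in>{1..N}. walk_pos d s n = walk_pos d t n}"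
    by (auto simp: graph_points_def)
  then have "card (graph_points d N s \<inter> graph_points d N t) = card {n\<in>{1..N}. walk_pos d s n = walk_pos d t n}"
    by (simp add: card_image inj_on_def)
  also have "\<dots> = meeting_count d N origin s t"
    unfolding meeting_count_def by (simp add: sum.inter_filter[symmetric] walks_meet_def walk_pos_eq_iff)
  finally show ?thesis .
qed

lemma prod_power_indicator:
  assumes "finite J" "S \<subseteq> J"
  shows "(\<Prod>i\<in>J. g i ^ (if i \<in> S then 1 else 0)) = (\<Prod>i\<in>S. g i)"
proof -
  have "(\<Prod>i\<in>J. g i ^ (if i \<in> S then 1 else 0)) = (\<Prod>i\<in>J. if i \<in> S then g i else 1)"
    by (intro prod.cong) auto
  also have "\<dots> = (\<Prod>i\<in>{i\<in>J. i \<in> S}. g i)"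
    using assms by (simp add: prod.inter_filter)
  also have "{i\<in>J. i \<in> S} = S"
    using assms by auto
  finally show ?thesis .
qed

lemma mean_power_meeting_count_sub_1_sq_le:
  assumes "num_steps d > 0" "x \<ge> 1"
  shows "(\<Sum>s\<in>walks d N. \<Sum>t\<in>walks d N. (x ^ meeting_count d N origin s t - 1)\<^sup>2) / (num_steps d ^ N)\<^sup>2
     \<le> meeting_mgf d (x\<^sup>2) N origin - 1"
proof -
  have K: "(num_steps d ^ N)\<^sup>2 > 0" using assms by simp
  have "(\<Sum>s\<in>walks d N. \<Sum>t\<in>walks d N. (x ^ meeting_count d N origin s t - 1)\<^sup>2)
     \<le> (\<Sum>s\<in>walks d N. \<Sum>t\<in>walks d N. (x\<^sup>2) ^ meeting_count d N origin s t - 1)"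
    using assms by (intro sum_mono power_sub_1_sq_le)
  also have "\<dots> = (\<Sum>s\<in>walks d N. \<Sum>t\<in>walks d N. (x\<^sup>2) ^ meeting_count d N origin s t) - (num_steps d ^ N)\<^sup>2"
    by (simp add: sum_subtractf card_walks_real power2_eq_square)
  finally have "(\<Sum>s\<in>walks d N. \<Sum>t\<in>walks d N. (x ^ meeting_count d N origin s t - 1)\<^sup>2) / (num_steps d ^ N)\<^sup>2
     \<le> ((\<Sum>s\<in>walks d N. \<Sum>t\<in>walks d N. (x\<^sup>2) ^ meeting_count d N origin s t) - (num_steps d ^ N)\<^sup>2)
        / (num_steps d ^ N)\<^sup>2"
    using K by (intro divide_right_mono) auto
  also have "\<dots> = (\<Sum>s\<in>walks d N. \<Sum>t\<in>walks d N. (x\<^sup>2) ^ meeting_count d N origin s t)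
        / (num_steps d ^ N)\<^sup>2 - 1"
    using K by (simp add: diff_divide_distrib)
  also have "\<dots> = meeting_mgf d (x\<^sup>2) N origin - 1"
    by (simp add: meeting_mgf_def power_mult[symmetric] mult.commute)
  finally show ?thesis .
qed

section \<open>The random environment\<close>

locale random_environment = prob_space Q for Q :: "'q measure" +
  fixes d :: nat and h :: "nat \<Rightarrow> int list \<Rightarrow> 'q \<Rightarrow> real"
  assumes h_meas: "\<And>n x. x \<in> lattice d \<Longrightarrow> h n x \<in> borel_measurable Q"
    and h_indep: "indep_vars (\<lambda>_. borel) (\<lambda>(n, x). h n x) (UNIV \<times> lattice d)"
    and h_plus: "\<And>n x. x \<in> lattice d \<Longrightarrow> measure Q {q \<in> space Q. h n x q = 1} = 1 / 2"
    and h_minus: "\<And>n x. x \<in> lattice d \<Longrightarrow> measure Q {q \<in> space Q. h n x q = - 1} = 1 / 2"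
begin

lemma env_level_set_measurable: "x \<in> lattice d \<Longrightarrow> {q \<in> space Q. h n x q = a} \<in> sets Q"
  using h_meas by measurable

lemma AE_env_pm1:
  assumes x: "x \<in> lattice d"
  shows "AE q in Q. h n x q = 1 \<or> h n x q = -1"
proof -
  let ?A = "{q \<in> space Q. h n x q = 1}" and ?B = "{q \<in> space Q. h n x q = -1}"
  have "prob (?A \<union> ?B) = prob ?A + prob ?B"
    by (intro finite_measure_Union env_level_set_measurable x) auto
  also have "\<dots> = 1" using h_plus[OF x, of n] h_minus[OF x, of n] by simp
  finally have "AE q in Q. q \<in> ?A \<union> ?B" by (rule AE_prob_1)
  then show ?thesis by eventually_elim auto
qed

lemma env_power_integral:
  assumes x: "x \<in> lattice d"
  shows "integrable Q (\<lambda>q. (1 + c * h n x q) ^ k)"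
    and "(\<integral>q. (1 + c * h n x q) ^ k \<partial>Q) = ((1 + c) ^ k + (1 - c) ^ k) / 2"
proof -
  let ?A = "{q \<in> space Q. h n x q = 1}" and ?B = "{q \<in> space Q. h n x q = -1}"
  define g where "g q = (1 + c) ^ k * indicator ?A q + (1 - c) ^ k * indicator ?B q" for q
  have gm: "g \<in> borel_measurable Q"
    unfolding g_def using env_level_set_measurable[OF x] by measurable
  have fm: "(\<lambda>q. (1 + c * h n x q) ^ k) \<in> borel_measurable Q"
    using h_meas[OF x] by measurable
  have ae: "AE q in Q. (1 + c * h n x q) ^ k = g q"
    using AE_env_pm1[OF x] AE_space by eventually_elim (auto simp: g_def indicator_def)
  have iA: "integrable Q (indicator ?A :: 'q \<Rightarrow> real)" and iB: "integrable Q (indicator ?B :: 'q \<Rightarrow> real)"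
    by (intro integrable_real_indicator env_level_set_measurable[OF x], simp add: less_top[symmetric])+
  then have gi: "integrable Q g"
    unfolding g_def by simp
  show "integrable Q (\<lambda>q. (1 + c * h n x q) ^ k)"
    using integrable_cong_AE[OF fm gm ae] gi by simp
  have "(\<integral>q. (1 + c * h n x q) ^ k \<partial>Q) = (\<integral>q. g q \<partial>Q)"
    by (rule integral_cong_AE[OF fm gm ae])
  also have "\<dots> = (1 + c) ^ k * prob ?A + (1 - c) ^ k * prob ?B"
  proof -
    have "?A \<inter> space Q = ?A" and "?B \<inter> space Q = ?B" by auto
    then show ?thesis unfolding g_def using iA iB by simp
  qed
  also have "\<dots> = ((1 + c) ^ k + (1 - c) ^ k) / 2"
    by (simp only: h_plus[OF x] h_minus[OF x]) (simp add: field_simps)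
  finally show "(\<integral>q. (1 + c * h n x q) ^ k \<partial>Q) = ((1 + c) ^ k + (1 - c) ^ k) / 2" .
qed

definition env :: "nat \<times> int list \<Rightarrow> 'q \<Rightarrow> real" where
  "env = (\<lambda>(n, x). h n x)"

lemma integral_prod_env_powers:
  assumes J: "finite J" "J \<subseteq> UNIV \<times> lattice d"
  shows "integrable Q (\<lambda>q. \<Prod>i\<in>J. (1 + c * env i q) ^ m i)"
    and "(\<integral>q. (\<Prod>i\<in>J. (1 + c * env i q) ^ m i) \<partial>Q) = (\<Prod>i\<in>J. ((1 + c) ^ m i + (1 - c) ^ m i) / 2)"
proof -
  have "indep_vars (\<lambda>_. borel) (\<lambda>i q. (\<lambda>y. (1 + c * y) ^ m i) ((\<lambda>(n, x). h n x) i q)) J"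
    by (rule indep_vars_compose2[OF indep_vars_subset[OF h_indep J(2)]]) auto
  then have ind: "indep_vars (\<lambda>_. borel) (\<lambda>i q. (1 + c * env i q) ^ m i) J"
    by (simp add: env_def)
  have int: "integrable Q (\<lambda>q. (1 + c * env i q) ^ m i)" if "i \<in> J" for i
    using that J(2) env_power_integral(1) by (auto simp: env_def)
  show "integrable Q (\<lambda>q. \<Prod>i\<in>J. (1 + c * env i q) ^ m i)"
    by (rule indep_vars_integrable[OF J(1) ind int])
  have "(\<integral>q. (\<Prod>i\<in>J. (1 + c * env i q) ^ m i) \<partial>Q) = (\<Prod>i\<in>J. \<integral>q. (1 + c * env i q) ^ m i \<partial>Q)"
    by (rule indep_vars_lebesgue_integral[OF J(1) ind int])
  also have "\<dots> = (\<Prod>i\<in>J. ((1 + c) ^ m i + (1 - c) ^ m i) / 2)"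
    using J(2) by (intro prod.cong refl) (auto simp: env_def env_power_integral(2))
  finally show "(\<integral>q. (\<Prod>i\<in>J. (1 + c * env i q) ^ m i) \<partial>Q) = (\<Prod>i\<in>J. ((1 + c) ^ m i + (1 - c) ^ m i) / 2)" .
qed

lemma polymer_weight_measurable: "polymer_weight d c h N s \<in> borel_measurable Q"
  unfolding polymer_weight_def
  by (intro borel_measurable_prod borel_measurable_add borel_measurable_const borel_measurable_times
      h_meas walk_pos_in_lattice)

lemma polymer_weight_eq_prod_graph:
  "polymer_weight d c h N s q = (\<Prod>i\<in>graph_points d N s. 1 + c * env i q)"
  unfolding polymer_weight_def graph_points_def by (subst prod.reindex) (auto simp: inj_on_def env_def)

lemma integral_polymer_weight:
  shows "integrable Q (polymer_weight d c h N s)"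
    and "(\<integral>q. polymer_weight d c h N s q \<partial>Q) = 1"
proof -
  have e: "polymer_weight d c h N s = (\<lambda>q. \<Prod>i\<in>graph_points d N s. (1 + c * env i q) ^ (\<lambda>_. 1::nat) i)"
    by (simp add: polymer_weight_eq_prod_graph fun_eq_iff)
  show "integrable Q (polymer_weight d c h N s)"
    unfolding e by (intro integral_prod_env_powers(1) finite_graph_points graph_points_subset)
  show "(\<integral>q. polymer_weight d c h N s q \<partial>Q) = 1"
    unfolding e integral_prod_env_powers(2)[OF finite_graph_points graph_points_subset] by simp
qed

text \<open>Two walks share the environment exactly at their common space-time points, each of which
  contributes \<open>E (1 + c h)\<^sup>2 = 1 + c\<^sup>2\<close>.\<close>

lemma integral_polymer_weight_product:
  shows "integrable Q (\<lambda>q. polymer_weight d c h N s q * polymer_weight d c h N t q)"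
    and "(\<integral>q. polymer_weight d c h N s q * polymer_weight d c h N t q \<partial>Q) =
      (1 + c\<^sup>2) ^ meeting_count d N origin s t"
proof -
  let ?S = "graph_points d N s" and ?T = "graph_points d N t"
  define m :: "nat \<times> int list \<Rightarrow> nat" where "m i = (if i \<in> ?S then 1 else 0) + (if i \<in> ?T then 1 else 0)" for i
  have J: "finite (?S \<union> ?T)" "?S \<union> ?T \<subseteq> UNIV \<times> lattice d"
    using finite_graph_points graph_points_subset by auto
  have prod: "polymer_weight d c h N s q * polymer_weight d c h N t q =
      (\<Prod>i\<in>?S \<union> ?T. (1 + c * env i q) ^ m i)" for q
    unfolding m_def power_add prod.distrib polymer_weight_eq_prod_graph
    by (subst (1 2) prod_power_indicator) (auto simp: finite_graph_points)
  show "integrable Q (\<lambda>q. polymer_weight d c h N s q * polymer_weight d c h N t q)"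
    unfolding prod by (rule integral_prod_env_powers(1)[OF J])
  have "(\<integral>q. polymer_weight d c h N s q * polymer_weight d c h N t q \<partial>Q) =
      (\<Prod>i\<in>?S \<union> ?T. ((1 + c) ^ m i + (1 - c) ^ m i) / 2)"
    unfolding prod by (rule integral_prod_env_powers(2)[OF J])
  also have "\<dots> = (\<Prod>i\<in>?S \<union> ?T. if i \<in> ?S \<inter> ?T then 1 + c\<^sup>2 else 1)"
    by (intro prod.cong refl) (auto simp: m_def power2_eq_square algebra_simps)
  also have "\<dots> = (\<Prod>i\<in>{i\<in>?S \<union> ?T. i \<in> ?S \<inter> ?T}. 1 + c\<^sup>2)"
    using J(1) by (rule prod.inter_filter[symmetric])
  also have "{i\<in>?S \<union> ?T. i \<in> ?S \<inter> ?T} = ?S \<inter> ?T"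
    by auto
  also have "(\<Prod>i\<in>?S \<inter> ?T. 1 + c\<^sup>2) = (1 + c\<^sup>2) ^ meeting_count d N origin s t"
    by (simp add: card_graph_points_inter)
  finally show "(\<integral>q. polymer_weight d c h N s q * polymer_weight d c h N t q \<partial>Q) =
      (1 + c\<^sup>2) ^ meeting_count d N origin s t" .
qed

lemma weighted_avg_measurable: "weighted_avg d c h N w \<in> borel_measurable Q"
  unfolding weighted_avg_def using polymer_weight_measurable by measurable

lemma integral_weighted_avg_dev_sq:
  assumes K: "num_steps d > 0"
  shows "integrable Q (\<lambda>q. (weighted_avg d c h N w q - 1)\<^sup>2)"
    and "(\<integral>q. (weighted_avg d c h N w q - 1)\<^sup>2 \<partial>Q) =
      (\<Sum>s\<in>walks d N. \<Sum>t\<in>walks d N. w s * w t * ((1 + c\<^sup>2) ^ meeting_count d N origin s t - 1))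
        / (num_steps d ^ N)\<^sup>2
      + ((\<Sum>s\<in>walks d N. w s) / num_steps d ^ N - 1)\<^sup>2"
proof -
  let ?W = "walks d N" and ?K = "num_steps d ^ N" and ?F = "polymer_weight d c h N"
  define G where "G q = (\<Sum>s\<in>?W. \<Sum>t\<in>?W. (w s * w t / ?K\<^sup>2) * (?F s q * ?F t q))
      + (\<Sum>s\<in>?W. (- 2 * w s / ?K) * ?F s q) + 1" for q
  have expand: "(weighted_avg d c h N w q - 1)\<^sup>2 = G q" for q
    unfolding weighted_avg_def G_def using K by (intro weighted_sum_sub_1_sq) simp
  have "integrable Q G"
    unfolding G_def
    by (intro Bochner_Integration.integrable_add Bochner_Integration.integrable_sum
        integrable_mult_right integral_polymer_weight_product(1) integral_polymer_weight(1)) simp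
  then show "integrable Q (\<lambda>q. (weighted_avg d c h N w q - 1)\<^sup>2)"
    by (simp add: expand)
  have "(\<integral>q. (weighted_avg d c h N w q - 1)\<^sup>2 \<partial>Q) =
      (\<Sum>s\<in>?W. \<Sum>t\<in>?W. (w s * w t / ?K\<^sup>2) * (1 + c\<^sup>2) ^ meeting_count d N origin s t)
      + (\<Sum>s\<in>?W. - 2 * w s / ?K) + 1"
    unfolding expand G_def using integral_polymer_weight_product integral_polymer_weight
    by (simp add: integral_add integrable_sum integral_sum integrable_mult_right prob_space)
  then show "(\<integral>q. (weighted_avg d c h N w q - 1)\<^sup>2 \<partial>Q) =
      (\<Sum>s\<in>?W. \<Sum>t\<in>?W. w s * w t * ((1 + c\<^sup>2) ^ meeting_count d N origin s t - 1)) / ?K\<^sup>2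
      + ((\<Sum>s\<in>?W. w s) / ?K - 1)\<^sup>2"
    by (simp only: weighted_double_sum_eq)
qed

lemma weighted_avg_dev_sq_le:
  assumes K: "num_steps d > 0" and \<delta>: "\<delta> > 0"
    and mean: "(\<Sum>s\<in>walks d N. w s) / num_steps d ^ N = 1"
    and mean_sq: "(\<Sum>s\<in>walks d N. (w s)\<^sup>2) / num_steps d ^ N \<le> B"
  shows "(\<integral>q. (weighted_avg d c h N w q - 1)\<^sup>2 \<partial>Q) \<le>
    (\<delta> * B\<^sup>2 + (meeting_mgf d ((1 + c\<^sup>2)\<^sup>2) N origin - 1) / \<delta>) / 2"
proof -
  have K0: "num_steps d ^ N > 0" using K by simp
  have "(\<Sum>s\<in>walks d N. (w s)\<^sup>2) / num_steps d ^ N \<ge> 0"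
    using K0 by (intro divide_nonneg_nonneg sum_nonneg) auto
  then have B: "((\<Sum>s\<in>walks d N. (w s)\<^sup>2) / num_steps d ^ N)\<^sup>2 \<le> B\<^sup>2"
    using mean_sq by (intro power_mono) auto
  have "(\<integral>q. (weighted_avg d c h N w q - 1)\<^sup>2 \<partial>Q) =
      (\<Sum>s\<in>walks d N. \<Sum>t\<in>walks d N. w s * w t * ((1 + c\<^sup>2) ^ meeting_count d N origin s t - 1))
        / (num_steps d ^ N)\<^sup>2"
    using integral_weighted_avg_dev_sq(2)[OF K, of c N w] mean by simp
  also have "\<dots> \<le> (\<delta> * ((\<Sum>s\<in>walks d N. (w s)\<^sup>2) / num_steps d ^ N)\<^sup>2 +
      ((\<Sum>s\<in>walks d N. \<Sum>t\<in>walks d N. ((1 + c\<^sup>2) ^ meeting_count d N origin s t - 1)\<^sup>2)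
        / (num_steps d ^ N)\<^sup>2) / \<delta>) / 2"
    by (rule double_sum_am_gm_le[OF K0 \<delta>])
  also have "\<dots> \<le> (\<delta> * B\<^sup>2 + (meeting_mgf d ((1 + c\<^sup>2)\<^sup>2) N origin - 1) / \<delta>) / 2"
    using B mean_power_meeting_count_sub_1_sq_le[OF K, of "1 + c\<^sup>2" N] \<delta>
    by (intro divide_right_mono add_mono mult_left_mono) auto
  finally show ?thesis .
qed

lemma weighted_avg_dev_sq_tendsto_0:
  fixes c :: "nat \<Rightarrow> real" and w :: "nat \<Rightarrow> int list list \<Rightarrow> real"
  assumes d: "d \<in> {1, 2}"
    and c1: "d = 1 \<Longrightarrow> (\<lambda>N. (c N)\<^sup>2 * sqrt (real N)) \<longlonglongrightarrow> 0"
    and c2: "d = 2 \<Longrightarrow> (\<lambda>N. (c N)\<^sup>2 * ln (real N)) \<longlonglongrightarrow> 0"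
    and B: "B > 0"
    and mean: "\<forall>\<^sub>F N in sequentially. (\<Sum>s\<in>walks d N. w N s) / num_steps d ^ N = 1"
    and mean_sq: "\<forall>\<^sub>F N in sequentially. (\<Sum>s\<in>walks d N. (w N s)\<^sup>2) / num_steps d ^ N \<le> B"
  shows "(\<lambda>N. \<integral>q. (weighted_avg d (c N) h N (w N) q - 1)\<^sup>2 \<partial>Q) \<longlonglongrightarrow> 0"
proof (rule tendsto_0_by_tradeoff)
  show "0 \<le> (\<integral>q. (weighted_avg d (c N) h N (w N) q - 1)\<^sup>2 \<partial>Q)" for N
    by (rule integral_nonneg_AE) simp
  show "\<forall>\<^sub>F N in sequentially. \<forall>\<delta>>0. (\<integral>q. (weighted_avg d (c N) h N (w N) q - 1)\<^sup>2 \<partial>Q) \<le>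
      (\<delta> * B\<^sup>2 + (meeting_mgf d ((1 + (c N)\<^sup>2)\<^sup>2) N origin - 1) / \<delta>) / 2"
    using mean mean_sq
    by eventually_elim (blast intro: weighted_avg_dev_sq_le[OF num_steps_pos[OF d]])
  show "B\<^sup>2 > 0" using B by simp
  show "(\<lambda>N. meeting_mgf d ((1 + (c N)\<^sup>2)\<^sup>2) N origin - 1) \<longlonglongrightarrow> 0"
    by (rule meeting_mgf_tendsto_1[OF d c1 c2])
qed

lemma weighted_avg_tendsto_1_in_prob:
  fixes c :: "nat \<Rightarrow> real" and w :: "nat \<Rightarrow> int list list \<Rightarrow> real"
  assumes d: "d \<in> {1, 2}"
    and c1: "d = 1 \<Longrightarrow> (\<lambda>N. (c N)\<^sup>2 * sqrt (real N)) \<longlonglongrightarrow> 0"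
    and c2: "d = 2 \<Longrightarrow> (\<lambda>N. (c N)\<^sup>2 * ln (real N)) \<longlonglongrightarrow> 0"
    and B: "B > 0"
    and mean: "\<forall>\<^sub>F N in sequentially. (\<Sum>s\<in>walks d N. w N s) / num_steps d ^ N = 1"
    and mean_sq: "\<forall>\<^sub>F N in sequentially. (\<Sum>s\<in>walks d N. (w N s)\<^sup>2) / num_steps d ^ N \<le> B"
    and \<delta>: "\<delta> > 0"
  shows "(\<lambda>N. prob {q \<in> space Q. \<delta> \<le> \<bar>weighted_avg d (c N) h N (w N) q - 1\<bar>}) \<longlonglongrightarrow> 0"
proof -
  let ?E = "\<lambda>N. \<integral>q. (weighted_avg d (c N) h N (w N) q - 1)\<^sup>2 \<partial>Q"
  have "(\<lambda>N. ?E N / \<delta>\<^sup>2) \<longlonglongrightarrow> 0 / \<delta>\<^sup>2"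
    using weighted_avg_dev_sq_tendsto_0[OF d c1 c2 B mean mean_sq] \<delta> by (intro tendsto_divide) auto
  then have lim: "(\<lambda>N. ?E N / \<delta>\<^sup>2) \<longlonglongrightarrow> 0" by simp
  have "prob {q \<in> space Q. \<delta> \<le> \<bar>weighted_avg d (c N) h N (w N) q - 1\<bar>} \<le> ?E N / \<delta>\<^sup>2" for N
    using second_moment_method[of "\<lambda>q. weighted_avg d (c N) h N (w N) q - 1" \<delta>] \<delta>
      weighted_avg_measurable integral_weighted_avg_dev_sq(1)[OF num_steps_pos[OF d]]
    by simp
  then show ?thesis
    by (intro tendsto_sandwich[OF _ _ tendsto_const lim] always_eventually allI) simp_all
qed

end

theorem theorem1:
  fixes d :: nat and c :: "nat \<Rightarrow> real"
    and Q :: "'q measure" and h :: "nat \<Rightarrow> int list \<Rightarrow> 'q \<Rightarrow> real"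
  assumes d: "d \<in> {1, 2}"
    and c_pos: "\<And>N. c N > 0"
    and c1: "d = 1 \<Longrightarrow> (\<lambda>N. (c N)\<^sup>2 * sqrt (real N)) \<longlonglongrightarrow> 0"
    and c2: "d = 2 \<Longrightarrow> (\<lambda>N. (c N)\<^sup>2 * ln (real N)) \<longlonglongrightarrow> 0"
    and Q: "prob_space Q"
    and h_meas: "\<And>n x. x \<in> lattice d \<Longrightarrow> h n x \<in> borel_measurable Q"
    and h_indep: "prob_space.indep_vars Q (\<lambda>_. borel) (\<lambda>(n, x). h n x) (UNIV \<times> lattice d)"
    and h_plus: "\<And>n x. x \<in> lattice d \<Longrightarrow> measure Q {q \<in> space Q. h n x q = 1} = 1 / 2"
    and h_minus: "\<And>n x. x \<in> lattice d \<Longrightarrow> measure Q {q \<in> space Q. h n x q = - 1} = 1 / 2"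
  shows "\<forall>\<epsilon>>0. (\<lambda>N. measure Q {q \<in> space Q.
            \<bar>mean_sq_disp d (c N) (\<lambda>n x. h n x q) N / real N - 1\<bar> > \<epsilon>}) \<longlonglongrightarrow> 0"
proof (intro allI impI)
  fix \<epsilon> :: real
  assume \<epsilon>: "\<epsilon> > 0"
  interpret random_environment Q d h
    by (intro random_environment.intro random_environment_axioms.intro Q h_meas h_indep h_plus h_minus)
  define Z where "Z N = weighted_avg d (c N) h N (\<lambda>_. 1)" for N
  define A where "A N = weighted_avg d (c N) h N (\<lambda>s. sqnorm (walk_pos d s N) / real N)" for N
  have Z: "(\<lambda>N. prob {q \<in> space Q. \<delta> \<le> \<bar>Z N q - 1\<bar>}) \<longlonglongrightarrow> 0" if "\<delta> > 0" for \<delta>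
    unfolding Z_def using num_steps_pos[OF d]
    by (intro weighted_avg_tendsto_1_in_prob[OF d c1 c2, of 1] always_eventually allI that)
      (simp_all add: card_walks_real)
  have A: "(\<lambda>N. prob {q \<in> space Q. \<delta> \<le> \<bar>A N q - 1\<bar>}) \<longlonglongrightarrow> 0" if "\<delta> > 0" for \<delta>
    unfolding A_def using that
    by (intro weighted_avg_tendsto_1_in_prob[OF d c1 c2, of 9]
        eventually_mono[OF eventually_ge_at_top[of 1]] normalized_sqnorm_endpoint_moments[OF d])
      simp_all
  have "mean_sq_disp d (c N) (\<lambda>n x. h n x q) N / real N = A N q / Z N q" for N q
    by (simp add: mean_sq_disp_eq_ratio[OF num_steps_low_dim[OF d]] A_def Z_def weighted_avg_divide)
  moreover have "(\<lambda>N. prob {q \<in> space Q. \<epsilon> < \<bar>A N q / Z N q - 1\<bar>}) \<longlonglongrightarrow> 0"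
    by (rule ratio_tendsto_1_in_prob[OF _ _ Z A \<epsilon>]) (simp_all add: A_def Z_def weighted_avg_measurable)
  ultimately show "(\<lambda>N. measure Q {q \<in> space Q.
      \<bar>mean_sq_disp d (c N) (\<lambda>n x. h n x q) N / real N - 1\<bar> > \<epsilon>}) \<longlonglongrightarrow> 0"
    by simp
qed

end
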